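(* For any integers $b \ge 2$ and $n \ge 1$, let $X_0,\dots,X_{n-1}$ be produced by the balanced base-$b$ enumeration procedure described in the context, and for $\ell \in \{1,\dots,L\}$ and $d \in \{0,\dots,b-1\}$ let $c_{\ell,d}(n) = |\{k \in \{0,\dots,n-1\} : (X_k)_\ell = d\}|$. Then $\max_{\ell,d} c_{\ell,d}(n) - \min_{\ell,d} c_{\ell,d}(n) \le 1$. Equivalently, for each $\ell$, every digit $d$ appears either $\lfloor n/b \rfloor$ or $\lceil n/b \rceil$ times in position $\ell$ among $X_0,\dots,X_{n-1}$.
   Context: Balanced base-$b$ enumeration: given $b \ge 2$ and $n \ge 1$, let $L = \min\{\ell \ge 1 : b^\ell \ge n\}$. For $t = 0,1,\dots,b^{L-1}-1$ in increasing order, let $(j_2,\dots,j_L) \in \{0,\dots,b-1\}^{L-1}$ be the unique digits with $t = \sum_{r=2}^L j_r b^{L-r}$ (base-$b$ representation left-padded with zeros), and for $i = 0,1,\dots,b-1$ in increasing order output the vector $\bigl(i, (i+j_2) \bmod b, \dots, (i+j_L) \bmod b\bigr) \in \{0,\dots,b-1\}^L$. The outputs are indexed $X_0, X_1, \dots$ in the order produced, and the procedure stops as soon as $n$ vectors $X_0,\dots,X_{n-1}$ have been produced. $(X_k)_\ell$ denotes the $\ell$-th coordinate of $X_k$. *)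

theory Defs
  imports Main
begin

definition enum_len :: "nat \<Rightarrow> nat \<Rightarrow> nat" where
  "enum_len b n = (LEAST l. 1 \<le> l \<and> n \<le> b ^ l)"

definition enum_vec :: "nat \<Rightarrow> nat \<Rightarrow> nat \<Rightarrow> nat \<Rightarrow> nat" where
  "enum_vec b n k l =
     (let L = enum_len b n; t = k div b; i = k mod b in
      if l = 1 then i else (i + (t div b ^ (L - l)) mod b) mod b)"

definition digit_count :: "nat \<Rightarrow> nat \<Rightarrow> nat \<Rightarrow> nat \<Rightarrow> nat" where
  "digit_count b n l d = card {k. k < n \<and> enum_vec b n k l = d}"

end

theory Submission
  imports Defs "HOL-Number_Theory.Cong"
begin

(* The outputs X_(tb), ..., X_(tb+b-1) share the same t, so along such a block coordinate l
   runs through i or (i + j_l) mod b for i = 0, ..., b-1: a rotation of the digits.  Hence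
   every digit occurs exactly once in position l in each of the n div b complete blocks and at
   most once in the final incomplete block. *)

lemma mod_add_right_inj:
  fixes i j c b :: nat
  assumes "i < b" "j < b" "(i + c) mod b = (j + c) mod b"
  shows "i = j"
proof -
  have "[i = j] (mod b)"
    using assms(3) by (simp add: cong_def[symmetric] cong_add_rcancel_nat)
  then show ?thesis
    using assms(1,2) by (simp add: cong_def)
qed

lemma div_eq_iff_mem_block:
  fixes k b t :: nat
  assumes "b > 0"
  shows "k div b = t \<longleftrightarrow> k \<in> {t*b..<t*b+b}"
proof
  assume "k div b = t"
  then show "k \<in> {t*b..<t*b+b}"
    using dividend_less_div_times[OF assms, of k] by (auto simp: add.commute)
next
  assume "k \<in> {t*b..<t*b+b}"
  then show "k div b = t"
    by (intro div_nat_eqI) (simp_all add: mult.commute)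
qed

lemma card_level_set_le_div_Suc:
  fixes f :: "nat \<Rightarrow> 'a"
  assumes "b > 0" and inj: "\<And>t. inj_on f {t*b..<t*b+b}"
  shows "card {k. k < n \<and> f k = d} \<le> n div b + 1"
proof -
  have "inj_on (\<lambda>k. k div b) {k. k < n \<and> f k = d}"
  proof (rule inj_onI)
    fix k k' assume "k \<in> {k. k < n \<and> f k = d}" "k' \<in> {k. k < n \<and> f k = d}"
      and same_block: "k div b = k' div b"
    then have "f k = f k'" by simp
    moreover have "k \<in> {k div b * b..<k div b * b + b}"
      by (rule div_eq_iff_mem_block[OF \<open>b > 0\<close>, THEN iffD1, OF refl])
    moreover have "k' \<in> {k div b * b..<k div b * b + b}"
      by (rule div_eq_iff_mem_block[OF \<open>b > 0\<close>, THEN iffD1, OF same_block[symmetric]])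
    ultimately show "k = k'" by (rule inj_onD[OF inj])
  qed
  moreover have "(\<lambda>k. k div b) ` {k. k < n \<and> f k = d} \<subseteq> {..n div b}"
    by (auto intro: div_le_mono)
  ultimately have "card {k. k < n \<and> f k = d} \<le> card {..n div b}"
    by (rule card_inj_on_le) simp
  then show ?thesis by simp
qed

lemma card_level_set_ge_div:
  fixes f :: "nat \<Rightarrow> 'a"
  assumes hit: "\<And>t. d \<in> f ` {t*b..<t*b+b}"
  shows "n div b \<le> card {k. k < n \<and> f k = d}"
proof -
  have "\<forall>t. \<exists>k \<in> {t*b..<t*b+b}. f k = d"
    using hit by blast
  then obtain g where g: "\<And>t. g t \<in> {t*b..<t*b+b}" "\<And>t. f (g t) = d"
    by metis
  have block_index: "g t div b = t" for t
    using g(1)[of t] by (intro div_nat_eqI) (simp_all add: mult.commute)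
  have "inj_on g {..<n div b}"
    by (rule inj_on_inverseI[of _ "\<lambda>k. k div b"]) (rule block_index)
  moreover have "g ` {..<n div b} \<subseteq> {k. k < n \<and> f k = d}"
  proof (intro image_subsetI CollectI conjI)
    fix t assume "t \<in> {..<n div b}"
    have "t*b + b = Suc t * b" by simp
    also have "\<dots> \<le> n div b * b"
      using \<open>t \<in> {..<n div b}\<close> by (intro mult_le_mono1) simp
    also have "\<dots> \<le> n" by simp
    finally show "g t < n"
      using g(1)[of t] by simp
    show "f (g t) = d" by (rule g(2))
  qed
  ultimately have "card {..<n div b} \<le> card {k. k < n \<and> f k = d}"
    by (rule card_inj_on_le) simp
  then show ?thesis by simp
qed

lemma enum_vec_less: "b > 0 \<Longrightarrow> enum_vec b n k l < b"
  by (simp add: enum_vec_def Let_def)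

lemma inj_on_enum_vec_block:
  assumes "b > 0"
  shows "inj_on (\<lambda>k. enum_vec b n k l) {t*b..<t*b+b}"
proof (rule inj_onI)
  fix k k' assume "k \<in> {t*b..<t*b+b}" "k' \<in> {t*b..<t*b+b}"
    and coord: "enum_vec b n k l = enum_vec b n k' l"
  then have "k div b = t" "k' div b = t"
    by (simp_all only: div_eq_iff_mem_block[OF \<open>b > 0\<close>])
  have "k mod b = k' mod b"
  proof (cases "l = 1")
    case True
    then show ?thesis using coord by (simp add: enum_vec_def)
  next
    case False
    let ?c = "t div b ^ (enum_len b n - l) mod b"
    have "(k mod b + ?c) mod b = (k' mod b + ?c) mod b"
      using coord False
      unfolding enum_vec_def Let_def \<open>k div b = t\<close> \<open>k' div b = t\<close>
      by (simp only: if_False)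
    then show ?thesis
      using mod_add_right_inj mod_less_divisor[OF \<open>b > 0\<close>] by blast
  qed
  then show "k = k'"
    using \<open>k div b = t\<close> \<open>k' div b = t\<close> div_mult_mod_eq[of k b] div_mult_mod_eq[of k' b]
    by simp
qed

lemma enum_vec_block_image:
  assumes "b > 0"
  shows "(\<lambda>k. enum_vec b n k l) ` {t*b..<t*b+b} = {..<b}"
proof (rule card_subset_eq)
  show "(\<lambda>k. enum_vec b n k l) ` {t*b..<t*b+b} \<subseteq> {..<b}"
    using enum_vec_less[OF assms] by auto
  show "card ((\<lambda>k. enum_vec b n k l) ` {t*b..<t*b+b}) = card {..<b}"
    using card_image[OF inj_on_enum_vec_block[OF assms]] by simp
qed simp

lemma digit_count_bounds:
  assumes "b > 0" "d < b"
  shows "n div b \<le> digit_count b n l d" "digit_count b n l d \<le> n div b + 1"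
proof -
  have "d \<in> (\<lambda>k. enum_vec b n k l) ` {t*b..<t*b+b}" for t
    using enum_vec_block_image[OF assms(1)] assms(2) by simp
  then show "n div b \<le> digit_count b n l d"
    unfolding digit_count_def by (rule card_level_set_ge_div)
  show "digit_count b n l d \<le> n div b + 1"
    unfolding digit_count_def
    by (rule card_level_set_le_div_Suc[OF assms(1) inj_on_enum_vec_block[OF assms(1)]])
qed

lemma enum_len_pos:
  assumes "b \<ge> 2"
  shows "1 \<le> enum_len b n"
proof -
  have "1 \<le> Suc n \<and> n \<le> b ^ Suc n"
    using power_gt_expt[of b "Suc n"] assms by simp
  then show ?thesis
    unfolding enum_len_def by (rule LeastI2[where Q = "\<lambda>l. 1 \<le> l"]) simp
qed

theorem theoremA2:
  fixes b n :: nat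
  assumes "b \<ge> 2" and "n \<ge> 1"
  shows "Max {digit_count b n l d | l d. l \<in> {1..enum_len b n} \<and> d < b}
       - Min {digit_count b n l d | l d. l \<in> {1..enum_len b n} \<and> d < b} \<le> 1"
proof -
  let ?S = "{digit_count b n l d | l d. l \<in> {1..enum_len b n} \<and> d < b}"
  have bounds: "?S \<subseteq> {n div b..n div b + 1}"
  proof
    fix c assume "c \<in> ?S"
    then obtain l d where "c = digit_count b n l d" "d < b" by blast
    then show "c \<in> {n div b..n div b + 1}"
      using digit_count_bounds[of b d n l] assms(1) by simp
  qed
  then have finite: "finite ?S" by (rule finite_subset) simp
  have "digit_count b n 1 0 \<in> ?S"
    using enum_len_pos assms(1) by force
  then have nonempty: "?S \<noteq> {}" by blast
  have "Max ?S \<le> n div b + 1"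
    using bounds Max_in[OF finite nonempty] by (meson atLeastAtMost_iff subsetD)
  moreover have "n div b \<le> Min ?S"
    using bounds Min_in[OF finite nonempty] by (meson atLeastAtMost_iff subsetD)
  ultimately show ?thesis by linarith
qed

end
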